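(* Let $P(q)=\sum_{j=0}^{n} q^{j}a_{j}$ be a slice regular polynomial of degree $n$ with quaternionic coefficients, and let $P'(q)=\sum_{j=1}^n q^{j-1}ja_j$. Then $$\|P'\|_{2}\leq n\|P\|_{2},$$ where for a slice regular function $f$ on the unit ball $\mathbb B$, $$\|f\|_{2}:=\sup_{I\in\mathbb S}\lim_{r\to1^{-}}\Big(\int_{0}^{2\pi}|f_{I}(re^{I\theta})|^{2}\,d\theta\Big)^{1/2}.$$ Moreover, equality holds if and only if $P(q)=q^{n}a_{n}$ for some $a_{n}\in\mathbb H$.
   Context: $\mathbb H$ denotes the quaternions with modulus $|q|=\sqrt{q\bar q}$; $\mathbb B=\{q\in\mathbb H:|q|<1\}$; $\mathbb S=\{q\in\mathbb H: q^2=-1\}$ is the sphere of imaginary units; for $I\in\mathbb S$, $\mathbb C_I=\mathbb R\oplus I\mathbb R$ and $f_I$ denotes the restriction of $f$ to $\mathbb B\cap\mathbb C_I$. A slice regular polynomial of degree $n$ is a function $q\mapsto\sum_{j=0}^n q^ja_j$, $a_j\in\mathbb H$, $a_n\neq0$. *)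

theory Defs
  imports "HOL-Analysis.Analysis"
begin

datatype quat = Quat (qre: real) (qi: real) (qj: real) (qk: real)

instantiation quat :: ring_1
begin

definition "0 = Quat 0 0 0 0"
definition "1 = Quat 1 0 0 0"
definition "p + q = Quat (qre p + qre q) (qi p + qi q) (qj p + qj q) (qk p + qk q)"
definition "p - q = Quat (qre p - qre q) (qi p - qi q) (qj p - qj q) (qk p - qk q)"
definition "- q = Quat (- qre q) (- qi q) (- qj q) (- qk q)"
definition "p * q = Quat
   (qre p * qre q - qi p * qi q - qj p * qj q - qk p * qk q)
   (qre p * qi q + qi p * qre q + qj p * qk q - qk p * qj q)
   (qre p * qj q - qi p * qk q + qj p * qre q + qk p * qi q)
   (qre p * qk q + qi p * qj q - qj p * qi q + qk p * qre q)"

instance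
  by standard
     (simp_all add: zero_quat_def one_quat_def plus_quat_def minus_quat_def
        uminus_quat_def times_quat_def algebra_simps)

end

definition qreal :: "real \<Rightarrow> quat" where
  "qreal x = Quat x 0 0 0"

definition qabs :: "quat \<Rightarrow> real" where
  "qabs q = sqrt ((qre q)\<^sup>2 + (qi q)\<^sup>2 + (qj q)\<^sup>2 + (qk q)\<^sup>2)"

definition imag_units :: "quat set" where
  "imag_units = {q. q * q = - 1}"

text \<open>The point \<open>r e^{I\<theta>} = r cos \<theta> + I r sin \<theta>\<close> of the slice \<open>C_I\<close>.\<close>
definition slice_exp :: "quat \<Rightarrow> real \<Rightarrow> real \<Rightarrow> quat" where
  "slice_exp I r \<theta> = qreal (r * cos \<theta>) + qreal (r * sin \<theta>) * I"

definition H2norm :: "(quat \<Rightarrow> quat) \<Rightarrow> real" where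
  "H2norm f = (SUP I\<in>imag_units.
     Lim (at_left (1::real))
       (\<lambda>r. sqrt (integral {0..2*pi} (\<lambda>\<theta>. (qabs (f (slice_exp I r \<theta>)))\<^sup>2))))"

definition spoly :: "nat \<Rightarrow> (nat \<Rightarrow> quat) \<Rightarrow> quat \<Rightarrow> quat" where
  "spoly n a q = (\<Sum>j\<le>n. q ^ j * a j)"

definition spoly_deriv :: "nat \<Rightarrow> (nat \<Rightarrow> quat) \<Rightarrow> quat \<Rightarrow> quat" where
  "spoly_deriv n a q = (\<Sum>j\<in>{1..n}. q ^ (j - 1) * (of_nat j * a j))"

end

theory Submission
  imports Defs
begin

text \<open>
  On a slice \<open>C_I\<close> the circle \<open>r e^{I\<theta>}\<close> commutes with \<open>I\<close>, so for right coefficients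
  \<open>c, d\<close> the Euclidean inner product of \<open>(r e^{I\<theta>})^j c\<close> and \<open>(r e^{I\<theta>})^k d\<close> is
  \<open>r^{j+k} (cos((k-j)\<theta>) \<langle>c,d\<rangle> + sin((k-j)\<theta>) \<langle>c,Id\<rangle>)\<close>. Integrating over \<open>\<theta>\<close> kills every
  term with \<open>j \<noteq> k\<close>, which gives Parseval's identity
  \<open>\<parallel>\<Sum> q^j a_j\<parallel>_2^2 = 2\<pi> \<Sum> |a_j|^2\<close>, independently of \<open>I\<close>. The derivative has coefficients
  \<open>j a_j\<close>, hence \<open>\<parallel>P'\<parallel>_2^2 = 2\<pi> \<Sum> j^2 |a_j|^2 \<le> n^2 \<parallel>P\<parallel>_2^2\<close>, with equality exactly when
  \<open>a_j = 0\<close> for all \<open>j < n\<close>. Parseval also shows that a polynomial vanishing identically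
  has zero coefficients, which identifies these \<open>P\<close> as the monomials \<open>q^n a_n\<close>.
\<close>

section \<open>Quaternion arithmetic\<close>

lemma quat_eq_iff: "p = q \<longleftrightarrow> qre p = qre q \<and> qi p = qi q \<and> qj p = qj q \<and> qk p = qk q"
  by (cases p; cases q) auto

lemmas quat_simps = zero_quat_def one_quat_def plus_quat_def minus_quat_def
  uminus_quat_def times_quat_def qreal_def

lemma quat_components_sum:
  "qre (sum f A) = (\<Sum>x\<in>A. qre (f x))" "qi (sum f A) = (\<Sum>x\<in>A. qi (f x))"
  "qj (sum f A) = (\<Sum>x\<in>A. qj (f x))" "qk (sum f A) = (\<Sum>x\<in>A. qk (f x))"
  by (induction A rule: infinite_finite_induct; simp add: quat_simps)+

lemma of_nat_quat: "(of_nat m :: quat) = qreal (real m)"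
  by (induction m) (simp_all add: quat_simps)

definition quat_inner :: "quat \<Rightarrow> quat \<Rightarrow> real" where
  "quat_inner p q = qre p * qre q + qi p * qi q + qj p * qj q + qk p * qk q"

lemma qabs_square: "(qabs q)\<^sup>2 = quat_inner q q"
  unfolding qabs_def quat_inner_def by (simp add: power2_eq_square add_nonneg_nonneg)

lemma qabs_eq_0_iff: "qabs q = 0 \<longleftrightarrow> q = 0"
  unfolding qabs_def by (cases q) (simp add: quat_simps add_nonneg_eq_0_iff)

lemma qabs_qreal_mult_square: "(qabs (qreal x * q))\<^sup>2 = x\<^sup>2 * (qabs q)\<^sup>2"
  unfolding qabs_square quat_inner_def by (simp add: quat_simps power2_eq_square algebra_simps)

lemma quat_inner_sum_sum:
  "quat_inner (sum f A) (sum g B) = (\<Sum>j\<in>A. \<Sum>k\<in>B. quat_inner (f j) (g k))"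
  by (simp add: quat_inner_def quat_components_sum sum_distrib_left sum_distrib_right
      sum.distrib sum.swap[of _ B])

section \<open>Slices\<close>

lemma imag_unit_components:
  assumes "I \<in> imag_units"
  shows "qre I = 0" "(qi I)\<^sup>2 + (qj I)\<^sup>2 + (qk I)\<^sup>2 = 1"
proof -
  from assms have II: "I * I = -1" by (simp add: imag_units_def)
  have re: "qre I * qre I - qi I * qi I - qj I * qj I - qk I * qk I = -1"
    and im: "qre I * qi I = 0" "qre I * qj I = 0" "qre I * qk I = 0"
    using arg_cong[OF II, of qre] arg_cong[OF II, of qi] arg_cong[OF II, of qj]
      arg_cong[OF II, of qk]
    by (simp_all add: quat_simps algebra_simps)
  show "qre I = 0"
  proof (rule ccontr)
    assume "qre I \<noteq> 0"
    with im have "qi I = 0" "qj I = 0" "qk I = 0" by auto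
    with re have "qre I * qre I = -1" by simp
    then show False by (smt (verit) zero_le_square)
  qed
  with re show "(qi I)\<^sup>2 + (qj I)\<^sup>2 + (qk I)\<^sup>2 = 1" by (simp add: power2_eq_square)
qed

lemma slice_mult:
  assumes "I \<in> imag_units"
  shows "(qreal a + qreal b * I) * (qreal c + qreal d * I)
    = qreal (a * c - b * d) + qreal (a * d + b * c) * I"
proof -
  obtain b1 b2 b3 where I: "I = Quat 0 b1 b2 b3" and norm: "b1\<^sup>2 + b2\<^sup>2 + b3\<^sup>2 = 1"
    using imag_unit_components[OF assms] by (cases I) auto
  have "b * d * (b1\<^sup>2 + b2\<^sup>2 + b3\<^sup>2) = b * d" using norm by simp
  then show ?thesis unfolding I quat_eq_iff
    by (simp add: quat_simps algebra_simps power2_eq_square)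
qed

lemma slice_exp_power:
  assumes "I \<in> imag_units"
  shows "slice_exp I r \<theta> ^ j
    = qreal (r ^ j * cos (real j * \<theta>)) + qreal (r ^ j * sin (real j * \<theta>)) * I"
proof (induction j)
  case 0
  then show ?case by (simp add: quat_simps)
next
  case (Suc j)
  have "slice_exp I r \<theta> ^ Suc j = slice_exp I r \<theta> * slice_exp I r \<theta> ^ j" by simp
  also have "\<dots> = qreal (r * cos \<theta> * (r ^ j * cos (real j * \<theta>)) - r * sin \<theta> * (r ^ j * sin (real j * \<theta>)))
      + qreal (r * cos \<theta> * (r ^ j * sin (real j * \<theta>)) + r * sin \<theta> * (r ^ j * cos (real j * \<theta>))) * I"
    by (subst Suc.IH, unfold slice_exp_def, rule slice_mult[OF assms])
  also have "\<dots> = qreal (r ^ Suc j * cos (real (Suc j) * \<theta>))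
      + qreal (r ^ Suc j * sin (real (Suc j) * \<theta>)) * I"
    by (simp add: distrib_right cos_add sin_add algebra_simps)
  finally show ?case .
qed

lemma quat_inner_slice_mult:
  assumes "I \<in> imag_units"
  shows "quat_inner ((qreal \<alpha> + qreal \<beta> * I) * c) ((qreal \<gamma> + qreal \<delta> * I) * d)
    = (\<alpha> * \<gamma> + \<beta> * \<delta>) * quat_inner c d + (\<alpha> * \<delta> - \<beta> * \<gamma>) * quat_inner c (I * d)"
proof -
  obtain b1 b2 b3 where I: "I = Quat 0 b1 b2 b3" and norm: "b1\<^sup>2 + b2\<^sup>2 + b3\<^sup>2 = 1"
    using imag_unit_components[OF assms] by (cases I) auto
  obtain c0 c1 c2 c3 where c: "c = Quat c0 c1 c2 c3" by (cases c)
  obtain d0 d1 d2 d3 where d: "d = Quat d0 d1 d2 d3" by (cases d)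
  have "\<beta> * \<delta> * (b1\<^sup>2 + b2\<^sup>2 + b3\<^sup>2) * (c0 * d0 + c1 * d1 + c2 * d2 + c3 * d3)
      = \<beta> * \<delta> * (c0 * d0 + c1 * d1 + c2 * d2 + c3 * d3)"
    using norm by simp
  then show ?thesis unfolding I c d quat_inner_def
    by (simp add: quat_simps algebra_simps power2_eq_square)
qed

lemma quat_inner_slice_monomials:
  assumes I: "I \<in> imag_units"
  shows "quat_inner (slice_exp I r \<theta> ^ j * c) (slice_exp I r \<theta> ^ k * d)
    = r ^ (j + k) * (cos ((real k - real j) * \<theta>) * quat_inner c d
                   + sin ((real k - real j) * \<theta>) * quat_inner c (I * d))"
proof -
  have cos: "cos ((real k - real j) * \<theta>)
      = cos (real j * \<theta>) * cos (real k * \<theta>) + sin (real j * \<theta>) * sin (real k * \<theta>)"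
    by (simp add: left_diff_distrib cos_diff)
  have sin: "sin ((real k - real j) * \<theta>)
      = cos (real j * \<theta>) * sin (real k * \<theta>) - sin (real j * \<theta>) * cos (real k * \<theta>)"
    by (simp add: left_diff_distrib sin_diff)
  show ?thesis
    unfolding slice_exp_power[OF I] quat_inner_slice_mult[OF I] cos sin power_add
    by (simp only: distrib_left distrib_right left_diff_distrib right_diff_distrib
        mult.assoc mult.left_commute)
qed

section \<open>Parseval's identity\<close>

lemma has_integral_cos_integer_multiple:
  assumes "m \<in> \<int>"
  shows "((\<lambda>x. cos (m * x)) has_integral (if m = 0 then 2 * pi else 0)) {0..2 * pi}"
proof (cases "m = 0")
  case True
  then show ?thesis using has_integral_const_real[of "1::real" 0 "2 * pi"] by auto
next
  case False
  have "((\<lambda>x. cos (m * x)) has_integral (sin (m * (2 * pi)) / m - sin (m * 0) / m)) {0..2 * pi}"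
  proof (rule fundamental_theorem_of_calculus)
    show "((\<lambda>x. sin (m * x) / m) has_vector_derivative cos (m * x)) (at x within {0..2 * pi})"
      for x :: real
      using False unfolding has_vector_derivative_def by (intro derivative_eq_intros | force)+
  qed auto
  moreover have "sin (m * (2 * pi)) = 0"
    using sin_integer_2pi[OF assms] by (simp add: mult.commute mult.left_commute)
  ultimately show ?thesis using False by simp
qed

lemma has_integral_sin_integer_multiple:
  assumes "m \<in> \<int>"
  shows "((\<lambda>x. sin (m * x)) has_integral 0) {0..2 * pi}"
proof (cases "m = 0")
  case True
  then show ?thesis by simp
next
  case False
  have "((\<lambda>x. sin (m * x)) has_integral (- cos (m * (2 * pi)) / m - - cos (m * 0) / m)) {0..2 * pi}"
  proof (rule fundamental_theorem_of_calculus)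
    show "((\<lambda>x. - cos (m * x) / m) has_vector_derivative sin (m * x)) (at x within {0..2 * pi})"
      for x :: real
      using False unfolding has_vector_derivative_def by (intro derivative_eq_intros | force)+
  qed auto
  moreover have "cos (m * (2 * pi)) = 1"
    using cos_integer_2pi[OF assms] by (simp add: mult.commute mult.left_commute)
  ultimately show ?thesis using False by simp
qed

lemma has_integral_trig_frequency_difference:
  fixes j k :: nat
  shows "((\<lambda>\<theta>. C * (cos ((real k - real j) * \<theta>) * D + sin ((real k - real j) * \<theta>) * E))
    has_integral (if j = k then 2 * pi * C * D else 0)) {0..2 * pi}"
proof -
  have m: "real k - real j \<in> \<int>" by (metis Ints_diff Ints_of_nat)
  have "((\<lambda>\<theta>. C * D * cos ((real k - real j) * \<theta>) + C * E * sin ((real k - real j) * \<theta>))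
    has_integral (C * D * (if real k - real j = 0 then 2 * pi else 0) + C * E * 0)) {0..2 * pi}"
    by (intro has_integral_add has_integral_mult_right
        has_integral_cos_integer_multiple has_integral_sin_integer_multiple m)
  moreover have "(\<lambda>\<theta>. C * (cos ((real k - real j) * \<theta>) * D + sin ((real k - real j) * \<theta>) * E))
    = (\<lambda>\<theta>. C * D * cos ((real k - real j) * \<theta>) + C * E * sin ((real k - real j) * \<theta>))"
    by (simp add: algebra_simps)
  moreover have "(if j = k then 2 * pi * C * D else 0)
    = C * D * (if real k - real j = 0 then 2 * pi else 0) + C * E * 0"
    by auto
  ultimately show ?thesis by simp
qed

lemma has_integral_spoly_slice_circle:
  assumes I: "I \<in> imag_units"
  shows "((\<lambda>\<theta>. (qabs (spoly n c (slice_exp I r \<theta>)))\<^sup>2)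
    has_integral (2 * pi * (\<Sum>j\<le>n. r ^ (2 * j) * (qabs (c j))\<^sup>2))) {0..2 * pi}"
proof -
  let ?term = "\<lambda>j k \<theta>. r ^ (j + k) * (cos ((real k - real j) * \<theta>) * quat_inner (c j) (c k)
                                     + sin ((real k - real j) * \<theta>) * quat_inner (c j) (I * c k))"
  have expand: "(qabs (spoly n c (slice_exp I r \<theta>)))\<^sup>2 = (\<Sum>j\<le>n. \<Sum>k\<le>n. ?term j k \<theta>)" for \<theta>
    unfolding qabs_square spoly_def quat_inner_sum_sum
    by (intro sum.cong refl quat_inner_slice_monomials[OF I])
  have "((\<lambda>\<theta>. \<Sum>j\<le>n. \<Sum>k\<le>n. ?term j k \<theta>) has_integral
      (\<Sum>j\<le>n. \<Sum>k\<le>n. if j = k then 2 * pi * r ^ (j + k) * quat_inner (c j) (c k) else 0))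
      {0..2 * pi}"
    by (intro has_integral_sum finite_atMost has_integral_trig_frequency_difference)
  moreover have "(\<Sum>j\<le>n. \<Sum>k\<le>n. if j = k then 2 * pi * r ^ (j + k) * quat_inner (c j) (c k) else 0)
      = 2 * pi * (\<Sum>j\<le>n. r ^ (2 * j) * (qabs (c j))\<^sup>2)"
    by (simp only: sum.delta'[OF finite_atMost] sum_distrib_left qabs_square mult_2 atMost_iff
        order_refl if_True) (simp add: mult.assoc)
  ultimately show ?thesis unfolding expand by simp
qed

lemma imag_units_nonempty: "imag_units \<noteq> {}"
proof -
  have "Quat 0 1 0 0 \<in> imag_units" by (simp add: imag_units_def quat_simps)
  then show ?thesis by blast
qed

lemma H2norm_spoly: "H2norm (spoly n c) = sqrt (2 * pi * (\<Sum>j\<le>n. (qabs (c j))\<^sup>2))"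
proof -
  have "Lim (at_left 1)
      (\<lambda>r. sqrt (integral {0..2 * pi} (\<lambda>\<theta>. (qabs (spoly n c (slice_exp I r \<theta>)))\<^sup>2)))
    = sqrt (2 * pi * (\<Sum>j\<le>n. (qabs (c j))\<^sup>2))" if I: "I \<in> imag_units" for I
  proof -
    have "((\<lambda>r. sqrt (2 * pi * (\<Sum>j\<le>n. r ^ (2 * j) * (qabs (c j))\<^sup>2)))
        \<longlongrightarrow> sqrt (2 * pi * (\<Sum>j\<le>n. 1 ^ (2 * j) * (qabs (c j))\<^sup>2))) (at_left 1)"
      by (intro tendsto_intros)
    then show ?thesis
      unfolding integral_unique[OF has_integral_spoly_slice_circle[OF I]]
      by (intro tendsto_Lim) (simp_all add: trivial_limit_at_left_real)
  qed
  then show ?thesis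
    unfolding H2norm_def using imag_units_nonempty by (simp add: SUP_const cong: SUP_cong)
qed

lemma spoly_eq_0_imp_coeffs_eq_0:
  assumes "\<And>q. spoly n c q = 0" "j \<le> n"
  shows "c j = 0"
proof -
  have "spoly n c = spoly n (\<lambda>_. 0)" using assms(1) by (simp add: spoly_def fun_eq_iff)
  then have "sqrt (2 * pi * (\<Sum>i\<le>n. (qabs (c i))\<^sup>2)) = sqrt (2 * pi * (\<Sum>i\<le>n. (qabs 0)\<^sup>2))"
    unfolding H2norm_spoly[symmetric] by simp
  then have "(\<Sum>i\<le>n. (qabs (c i))\<^sup>2) = 0" by (simp add: qabs_eq_0_iff)
  then have "(qabs (c j))\<^sup>2 = 0" using assms(2) by (simp add: sum_nonneg_eq_0_iff)
  then show ?thesis by (simp add: qabs_eq_0_iff)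
qed

lemma spoly_monomial_iff: "(\<exists>b. \<forall>q. spoly n a q = q ^ n * b) \<longleftrightarrow> (\<forall>j<n. a j = 0)"
proof
  assume "\<exists>b. \<forall>q. spoly n a q = q ^ n * b"
  then obtain b where b: "\<And>q. spoly n a q = q ^ n * b" by blast
  define c where "c j = a j - (if j = n then b else 0)" for j
  have "spoly n c q = spoly n a q - q ^ n * b" for q
    by (simp add: spoly_def c_def right_diff_distrib sum_subtractf if_distrib[of "(*) _"]
        cong: if_cong)
  then have "c j = 0" if "j < n" for j
    using spoly_eq_0_imp_coeffs_eq_0[of n c j] b that by simp
  then show "\<forall>j<n. a j = 0" by (simp add: c_def)
next
  assume "\<forall>j<n. a j = 0"
  then have "spoly n a q = q ^ n * a n" for q
    unfolding spoly_def lessThan_Suc_atMost[symmetric] by simp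
  then show "\<exists>b. \<forall>q. spoly n a q = q ^ n * b" by blast
qed

definition spoly_deriv_coeffs :: "nat \<Rightarrow> (nat \<Rightarrow> quat) \<Rightarrow> nat \<Rightarrow> quat" where
  "spoly_deriv_coeffs n a i = (if i < n then of_nat (Suc i) * a (Suc i) else 0)"

lemma spoly_deriv_eq_spoly: "spoly_deriv n a = spoly n (spoly_deriv_coeffs n a)"
proof
  fix q
  have "spoly_deriv n a q = (\<Sum>i<n. q ^ i * (of_nat (Suc i) * a (Suc i)))"
    unfolding spoly_deriv_def by (simp add: sum.atLeast1_atMost_eq del: of_nat_Suc)
  also have "\<dots> = (\<Sum>i<Suc n. q ^ i * spoly_deriv_coeffs n a i)"
    by (simp add: spoly_deriv_coeffs_def del: of_nat_Suc)
  finally show "spoly_deriv n a q = spoly n (spoly_deriv_coeffs n a) q"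
    unfolding spoly_def lessThan_Suc_atMost .
qed

lemma sum_qabs_spoly_deriv_coeffs:
  "(\<Sum>i\<le>n. (qabs (spoly_deriv_coeffs n a i))\<^sup>2) = (\<Sum>j\<le>n. (real j)\<^sup>2 * (qabs (a j))\<^sup>2)"
proof -
  have "(\<Sum>i\<le>n. (qabs (spoly_deriv_coeffs n a i))\<^sup>2)
      = (\<Sum>i<Suc n. (qabs (spoly_deriv_coeffs n a i))\<^sup>2)"
    unfolding lessThan_Suc_atMost ..
  also have "\<dots> = (\<Sum>i<n. (real (Suc i))\<^sup>2 * (qabs (a (Suc i)))\<^sup>2)"
    using qabs_eq_0_iff[of 0]
    by (simp add: spoly_deriv_coeffs_def of_nat_quat qabs_qreal_mult_square del: of_nat_Suc)
  also have "\<dots> = (\<Sum>j<Suc n. (real j)\<^sup>2 * (qabs (a j))\<^sup>2)"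
    by (simp only: sum.lessThan_Suc_shift) simp
  finally show ?thesis unfolding lessThan_Suc_atMost .
qed

lemma sum_square_weighted_le:
  fixes x :: "nat \<Rightarrow> real"
  assumes "\<And>j. x j \<ge> 0"
  shows "(\<Sum>j\<le>n. (real j)\<^sup>2 * x j) \<le> (real n)\<^sup>2 * (\<Sum>j\<le>n. x j)"
    and "(\<Sum>j\<le>n. (real j)\<^sup>2 * x j) = (real n)\<^sup>2 * (\<Sum>j\<le>n. x j) \<longleftrightarrow> (\<forall>j<n. x j = 0)"
proof -
  define gap where "gap j = ((real n)\<^sup>2 - (real j)\<^sup>2) * x j" for j
  have sum_gap: "(real n)\<^sup>2 * (\<Sum>j\<le>n. x j) - (\<Sum>j\<le>n. (real j)\<^sup>2 * x j) = (\<Sum>j\<le>n. gap j)"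
    by (simp add: gap_def sum_distrib_left sum_subtractf left_diff_distrib)
  have gap_nonneg: "0 \<le> gap j" if "j \<in> {..n}" for j
    using assms that by (auto intro!: mult_nonneg_nonneg simp: gap_def power_mono)
  have gap_eq_0_iff: "gap j = 0 \<longleftrightarrow> j = n \<or> x j = 0" if "j \<le> n" for j
    using that by (auto simp: gap_def power2_eq_iff_nonneg)
  show "(\<Sum>j\<le>n. (real j)\<^sup>2 * x j) \<le> (real n)\<^sup>2 * (\<Sum>j\<le>n. x j)"
    using sum_gap sum_nonneg[of "{..n}" gap] gap_nonneg by fastforce
  have "(\<Sum>j\<le>n. (real j)\<^sup>2 * x j) = (real n)\<^sup>2 * (\<Sum>j\<le>n. x j) \<longleftrightarrow> (\<forall>j\<in>{..n}. gap j = 0)"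
    using sum_nonneg_eq_0_iff[of "{..n}" gap] gap_nonneg sum_gap by auto
  also have "\<dots> \<longleftrightarrow> (\<forall>j<n. x j = 0)"
    using gap_eq_0_iff by (metis atMost_iff le_eq_less_or_eq less_irrefl)
  finally show "(\<Sum>j\<le>n. (real j)\<^sup>2 * x j) = (real n)\<^sup>2 * (\<Sum>j\<le>n. x j) \<longleftrightarrow> (\<forall>j<n. x j = 0)" .
qed

theorem theorem1p4:
  fixes n :: nat and a :: "nat \<Rightarrow> quat"
  assumes "a n \<noteq> 0"
  shows "H2norm (spoly_deriv n a) \<le> real n * H2norm (spoly n a) \<and>
         (H2norm (spoly_deriv n a) = real n * H2norm (spoly n a) \<longleftrightarrow>
           (\<exists>b. \<forall>q. spoly n a q = q ^ n * b))"
proof -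
  define x where "x j = (qabs (a j))\<^sup>2" for j
  have x_nonneg: "x j \<ge> 0" for j unfolding x_def by simp
  have deriv: "H2norm (spoly_deriv n a) = sqrt (2 * pi * (\<Sum>j\<le>n. (real j)\<^sup>2 * x j))"
    unfolding spoly_deriv_eq_spoly H2norm_spoly sum_qabs_spoly_deriv_coeffs x_def ..
  have poly: "real n * H2norm (spoly n a) = sqrt (2 * pi * ((real n)\<^sup>2 * (\<Sum>j\<le>n. x j)))"
    unfolding H2norm_spoly x_def by (simp add: real_sqrt_mult)
  have "H2norm (spoly_deriv n a) \<le> real n * H2norm (spoly n a)"
    unfolding deriv poly using sum_square_weighted_le(1)[OF x_nonneg] by simp
  moreover have "H2norm (spoly_deriv n a) = real n * H2norm (spoly n a) \<longleftrightarrow> (\<forall>j<n. x j = 0)"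
    unfolding deriv poly using sum_square_weighted_le(2)[OF x_nonneg] by simp
  ultimately show ?thesis
    unfolding spoly_monomial_iff x_def by (simp add: qabs_eq_0_iff)
qed

end
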